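(* Let $q$ be a root of unity with $q^8\ne1$, $N=\mathrm{ord}(q^4)$, $\epsilon=q^{N^2}$, $\vec w\in\mathbb C^4$, and $\sigma\in\mathbb C^\times$ with $z_0:=\epsilon^2(\sigma^N+\sigma^{-N})\ne\pm2$. Then the image of $(\Pi_s,\Pi_t):E^0_{\sigma,\vec w}\to\mathbb C^2$ is exactly the curve $\{(x,y):xy=R(z_0,\vec w)\}$, where $$R(z_0,\vec w)=\frac{\kappa(W_1,W_2,z_0)\,\kappa(W_3,W_4,z_0)}{(z_0^2-4)^2},\qquad W_j=T_N(w_j).$$
   Context: $T_N$ is the Chebyshev polynomial with $T_N(t+t^{-1})=t^N+t^{-N}$. $\kappa(a,b,c)=a^2+b^2+c^2+abc-4$. For indices $i\in\mathbb Z/N$: $\lambda'_i=q^{4i+2}\sigma+q^{-4i-2}\sigma^{-1}$, $\hat\lambda_i=q^{4i}\sigma-q^{-4i}\sigma^{-1}$, $\hat\lambda'_i=q^{4i+2}\sigma-q^{-4i-2}\sigma^{-1}$; $r_i(\sigma,\vec w)=\dfrac{\kappa(w_1,w_2,\lambda'_i)\kappa(w_3,w_4,\lambda'_i)}{\hat\lambda_i\hat\lambda_{i+1}(\hat\lambda'_i)^2}$; $E^0_{\sigma,\vec w}=\{(s_1,\dots,s_N,t_1,\dots,t_N)\in\mathbb C^{2N}:s_it_i=r_i(\sigma,\vec w)\}$; $\Pi_s=\prod_{i=1}^Ns_i$, $\Pi_t=\prod_{i=1}^Nt_i$. *)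

theory Defs
  imports Complex_Main
begin

text \<open>Chebyshev polynomial normalised so that T_N(t + 1/t) = t^N + t^(-N).\<close>
fun cheb :: "nat \<Rightarrow> complex \<Rightarrow> complex" where
  "cheb 0 x = 2"
| "cheb (Suc 0) x = x"
| "cheb (Suc (Suc n)) x = x * cheb (Suc n) x - cheb n x"

definition kappa :: "complex \<Rightarrow> complex \<Rightarrow> complex \<Rightarrow> complex" where
  "kappa a b c = a^2 + b^2 + c^2 + a*b*c - 4"

definition ordN :: "complex \<Rightarrow> nat" where
  "ordN q = (LEAST n. n > 0 \<and> (q^4)^n = 1)"

definition lam' :: "complex \<Rightarrow> complex \<Rightarrow> nat \<Rightarrow> complex" where
  "lam' q \<sigma> i = q^(4*i+2) * \<sigma> + inverse (q^(4*i+2)) * inverse \<sigma>"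

definition lamhat :: "complex \<Rightarrow> complex \<Rightarrow> nat \<Rightarrow> complex" where
  "lamhat q \<sigma> i = q^(4*i) * \<sigma> - inverse (q^(4*i)) * inverse \<sigma>"

definition lamhat' :: "complex \<Rightarrow> complex \<Rightarrow> nat \<Rightarrow> complex" where
  "lamhat' q \<sigma> i = q^(4*i+2) * \<sigma> - inverse (q^(4*i+2)) * inverse \<sigma>"

text \<open>Indices i \<in> Z/N are represented by 0..N-1; r_{i+1} for i = N-1 equals r_0
  since q^(4N) = 1 (and lamhat is evaluated at the natural number i+1 anyway).\<close>
definition r_fun :: "complex \<Rightarrow> complex \<Rightarrow> complex \<Rightarrow> complex \<Rightarrow> complex \<Rightarrow> complex \<Rightarrow> nat \<Rightarrow> complex" where
  "r_fun q \<sigma> w1 w2 w3 w4 i =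
     kappa w1 w2 (lam' q \<sigma> i) * kappa w3 w4 (lam' q \<sigma> i)
     / (lamhat q \<sigma> i * lamhat q \<sigma> (i+1) * (lamhat' q \<sigma> i)^2)"

text \<open>E^0 as a set of pairs (s,t) of coordinate functions on indices 0..N-1
  (coordinates outside this range are fixed to 0 so points correspond to C^{2N}).\<close>
definition E0 :: "complex \<Rightarrow> complex \<Rightarrow> complex \<Rightarrow> complex \<Rightarrow> complex \<Rightarrow> complex
                   \<Rightarrow> ((nat \<Rightarrow> complex) \<times> (nat \<Rightarrow> complex)) set" where
  "E0 q \<sigma> w1 w2 w3 w4 =
     {(s, t). (\<forall>i < ordN q. s i * t i = r_fun q \<sigma> w1 w2 w3 w4 i)
              \<and> (\<forall>i \<ge> ordN q. s i = 0 \<and> t i = 0)}"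

definition Rfun :: "nat \<Rightarrow> complex \<Rightarrow> complex \<Rightarrow> complex \<Rightarrow> complex \<Rightarrow> complex \<Rightarrow> complex" where
  "Rfun N z0 w1 w2 w3 w4 =
     kappa (cheb N w1) (cheb N w2) z0 * kappa (cheb N w3) (cheb N w4) z0 / (z0^2 - 4)^2"

end

theory Submission
  imports Defs "HOL-Computational_Algebra.Polynomial"
begin

text \<open>Write \<open>p = q\<^sup>4\<close>, \<open>u = q\<^sup>2\<sigma>\<close>, \<open>w\<^sub>j = a\<^sub>j + a\<^sub>j\<inverse>\<close>, so that \<open>\<lambda>'\<^sub>i = u p\<^sup>i + (u p\<^sup>i)\<inverse>\<close>.
  Then \<open>\<kappa>(w\<^sub>1, w\<^sub>2, c)\<close> factors into two terms linear in \<open>c\<close>, and every factor of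
  \<open>\<Prod>\<^sub>i r\<^sub>i\<close> is multiplied out over the primitive \<open>N\<close>-th root of unity \<open>p\<close> by
  \<open>\<Prod>\<^sub>i (X - p\<^sup>i Y) = X\<^sup>N - Y\<^sup>N\<close>: the numerators become
  \<open>\<kappa>(T\<^sub>N w\<^sub>1, T\<^sub>N w\<^sub>2, z\<^sub>0) \<kappa>(T\<^sub>N w\<^sub>3, T\<^sub>N w\<^sub>4, z\<^sub>0)\<close> and the denominators \<open>(z\<^sub>0\<^sup>2 - 4)\<^sup>2\<close>,
  so \<open>\<Prod>\<^sub>i r\<^sub>i = R(z\<^sub>0, w)\<close>.  As the coordinates of \<open>E\<^sup>0\<close> are only constrained by
  \<open>s\<^sub>i t\<^sub>i = r\<^sub>i\<close>, the image of \<open>(\<Pi>\<^sub>s, \<Pi>\<^sub>t)\<close> is the hyperbola \<open>x y = \<Prod>\<^sub>i r\<^sub>i\<close>.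
  Since division by zero yields zero, the product identity also holds when \<open>z\<^sub>0 = \<plusminus>2\<close>.\<close>

definition joukowski :: "complex \<Rightarrow> complex" where
  "joukowski x = x + inverse x"

lemma joukowski_surj: "\<exists>x. x \<noteq> 0 \<and> joukowski x = w"
proof -
  define d where "d = csqrt (w\<^sup>2 - 4)"
  have prod: "((w + d) / 2) * ((w - d) / 2) = 1"
    using power2_csqrt[of "w\<^sup>2 - 4"] by (simp add: d_def field_simps power2_eq_square)
  then have "(w + d) / 2 \<noteq> 0" by auto
  moreover have "inverse ((w + d) / 2) = (w - d) / 2" by (rule inverse_unique[OF prod])
  then have "(w + d) / 2 + inverse ((w + d) / 2) = w" by (simp add: field_simps)
  ultimately show ?thesis unfolding joukowski_def by blast
qed

lemma cheb_joukowski: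
  assumes "x \<noteq> 0"
  shows "cheb n (joukowski x) = joukowski (x ^ n)"
proof (induction n rule: induct_nat_012)
  case (ge2 n)
  then show ?case using assms by (simp add: joukowski_def field_simps)
qed (simp_all add: joukowski_def)

lemma joukowski_diff:
  assumes "x \<noteq> 0" "y \<noteq> 0"
  shows "joukowski x - joukowski y = (x - y) * (x * y - 1) / (x * y)"
  using assms by (simp add: joukowski_def field_simps)

lemma kappa_joukowski:
  assumes "a \<noteq> 0" "b \<noteq> 0"
  shows "kappa (joukowski a) (joukowski b) c = (c + joukowski (a * b)) * (c + joukowski (a / b))"
  using assms by (simp add: kappa_def joukowski_def field_simps power2_eq_square)

lemma joukowski_mult_sign:
  assumes "e\<^sup>2 = 1"
  shows "joukowski (e * x) = e * joukowski x"
proof -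
  have "inverse e = e" using assms by (metis power2_eq_1_iff inverse_1 inverse_minus_eq)
  then show ?thesis by (simp add: joukowski_def distrib_left)
qed

locale primitive_root_of_unity =
  fixes p :: complex and N :: nat
  assumes N_pos: "N > 0"
    and power_N: "p ^ N = 1"
    and power_neq_1: "\<And>k. 0 < k \<Longrightarrow> k < N \<Longrightarrow> p ^ k \<noteq> 1"
begin

lemma nonzero: "p \<noteq> 0"
  using power_N N_pos by (metis power_0_left zero_neq_one less_not_refl)

lemma inj_on_powers: "inj_on (\<lambda>i. p ^ i) {..<N}"
proof -
  have "p ^ i \<noteq> p ^ j" if "i < j" "j < N" for i j
  proof
    assume "p ^ i = p ^ j"
    then have "p ^ (j - i) = 1" using that nonzero by (simp add: power_diff)
    then show False using power_neq_1[of "j - i"] that by simp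
  qed
  then show ?thesis by (metis inj_onI lessThan_iff linorder_neqE_nat)
qed

lemma prod_sub_powers: "(\<Prod>i<N. x - p ^ i) = x ^ N - 1"
proof -
  define P where "P = (\<Prod>i<N. [:- (p ^ i), 1:])"
  define Q where "Q = (monom 1 N - 1 :: complex poly)"
  have "P = Q"
  proof (rule poly_eqI_degree_lead_coeff[where n = N and A = "(\<lambda>i. p ^ i) ` {..<N}"])
    have "degree P = N" unfolding P_def by (simp add: degree_prod_eq_sum_degree)
    moreover have "lead_coeff P = 1" unfolding P_def by (simp add: lead_coeff_prod)
    ultimately show "coeff P N = coeff Q N" "degree P \<le> N"
      using N_pos by (simp_all add: Q_def coeff_monom)
    show "degree Q \<le> N"
      unfolding Q_def by (rule order.trans[OF degree_diff_le_max]) (simp add: degree_monom_le)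
    show "N \<le> card ((\<lambda>i. p ^ i) ` {..<N})"
      using card_image[OF inj_on_powers] by simp
    fix z assume "z \<in> (\<lambda>i. p ^ i) ` {..<N}"
    then obtain i where "i < N" "z = p ^ i" by blast
    moreover have "(p ^ i) ^ N = 1" by (metis power_N power_mult power_one mult.commute)
    ultimately show "poly P z = poly Q z"
      by (auto simp: P_def Q_def poly_prod poly_monom)
  qed
  then have "poly P x = poly Q x" by simp
  then show ?thesis by (simp add: P_def Q_def poly_prod poly_monom)
qed

lemma prod_sub_powers_mult: "(\<Prod>i<N. x - p ^ i * y) = x ^ N - y ^ N"
proof (cases "y = 0")
  case True
  then show ?thesis using N_pos by simp
next
  case False
  have "(\<Prod>i<N. x - p ^ i * y) = (\<Prod>i<N. y * (x / y - p ^ i))"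
    using False by (intro prod.cong) (simp_all add: field_simps)
  also have "\<dots> = y ^ N * ((x / y) ^ N - 1)"
    by (simp add: prod.distrib prod_sub_powers)
  also have "\<dots> = x ^ N - y ^ N"
    using False by (simp add: field_simps)
  finally show ?thesis .
qed

lemma prod_powers: "(\<Prod>i<N. p ^ i) = - ((- 1) ^ N)"
proof -
  have "(- 1) ^ N * (\<Prod>i<N. p ^ i) = - 1"
    using prod_sub_powers_mult[of 0 1] N_pos by (simp add: prod_uminus)
  then have "(- 1) ^ N * ((- 1) ^ N * (\<Prod>i<N. p ^ i)) = (- 1) ^ N * (- 1 :: complex)"
    by simp
  then show ?thesis by (simp flip: mult.assoc power_mult_distrib)
qed

lemma prod_joukowski_diff:
  assumes "u \<noteq> 0" "v \<noteq> 0"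
  shows "(\<Prod>i<N. joukowski (u * p ^ i) - joukowski v)
       = - ((- 1) ^ N) * (joukowski (u ^ N) - joukowski (v ^ N))"
proof -
  have "(\<Prod>i<N. joukowski (u * p ^ i) - joukowski v)
      = (\<Prod>i<N. (u * p ^ i - v) * (u * p ^ i * v - 1) / (u * p ^ i * v))"
    using assms nonzero by (intro prod.cong) (simp_all add: joukowski_diff)
  also have "\<dots> = (\<Prod>i<N. u * p ^ i - v) * (\<Prod>i<N. u * p ^ i * v - 1) / (\<Prod>i<N. u * p ^ i * v)"
    by (simp add: prod_dividef prod.distrib)
  also have "(\<Prod>i<N. u * p ^ i - v) = (- 1) ^ N * (v ^ N - u ^ N)"
    using prod_diff_swap[of "\<lambda>i. u * p ^ i" "\<lambda>_. v" "{..<N}"] prod_sub_powers_mult[of v u]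
    by (simp add: mult.commute)
  also have "(\<Prod>i<N. u * p ^ i * v - 1) = (- 1) ^ N * (1 - (u * v) ^ N)"
    using prod_diff_swap[of "\<lambda>i. u * p ^ i * v" "\<lambda>_. 1" "{..<N}"] prod_sub_powers_mult[of 1 "u * v"]
    by (simp add: mult_ac)
  also have "(\<Prod>i<N. u * p ^ i * v) = (u * v) ^ N * - ((- 1) ^ N)"
    by (simp add: prod.distrib prod_powers mult_ac power_mult_distrib)
  also have "(- 1) ^ N * (v ^ N - u ^ N) * ((- 1) ^ N * (1 - (u * v) ^ N)) / ((u * v) ^ N * - ((- 1) ^ N))
      = - ((- 1) ^ N) * ((u ^ N - v ^ N) * (u ^ N * v ^ N - 1) / (u ^ N * v ^ N))"
    using assms by (cases "even N") (simp_all add: field_simps power_mult_distrib)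
  also have "\<dots> = - ((- 1) ^ N) * (joukowski (u ^ N) - joukowski (v ^ N))"
    using assms by (simp add: joukowski_diff)
  finally show ?thesis .
qed

lemma prod_kappa_joukowski:
  assumes "u \<noteq> 0" "a \<noteq> 0" "b \<noteq> 0"
  shows "(\<Prod>i<N. kappa (joukowski a) (joukowski b) (joukowski (u * p ^ i)))
       = kappa (joukowski (a ^ N)) (joukowski (b ^ N)) (- ((- 1) ^ N) * joukowski (u ^ N))"
proof -
  define c where "c = - ((- 1) ^ N) * joukowski (u ^ N)"
  have sign: "((- 1) ^ N)\<^sup>2 = (1 :: complex)" by (simp flip: power_mult)
  have factor: "(\<Prod>i<N. joukowski (u * p ^ i) + joukowski x) = c + joukowski (x ^ N)"
    if "x \<noteq> 0" for x
  proof -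
    have "(\<Prod>i<N. joukowski (u * p ^ i) + joukowski x) = (\<Prod>i<N. joukowski (u * p ^ i) - joukowski (- x))"
      using joukowski_mult_sign[of "- 1" x] by simp
    also have "\<dots> = c + joukowski (x ^ N)"
      using prod_joukowski_diff[of u "- x"] assms that joukowski_mult_sign[OF sign, of "x ^ N"]
      by (simp add: c_def power_minus' algebra_simps)
    finally show ?thesis .
  qed
  have "(\<Prod>i<N. kappa (joukowski a) (joukowski b) (joukowski (u * p ^ i)))
      = (\<Prod>i<N. joukowski (u * p ^ i) + joukowski (a * b)) * (\<Prod>i<N. joukowski (u * p ^ i) + joukowski (a / b))"
    using assms by (simp add: kappa_joukowski prod.distrib)
  also have "\<dots> = kappa (joukowski (a ^ N)) (joukowski (b ^ N)) c"
    using assms by (simp add: factor kappa_joukowski power_mult_distrib power_divide)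
  finally show ?thesis unfolding c_def .
qed

lemma prod_sub_inverse:
  assumes "s \<noteq> 0"
  shows "(\<Prod>i<N. p ^ i * s - inverse (p ^ i * s)) = (s ^ N - 1) * (1 - (- 1) ^ N * s ^ N) / s ^ N"
proof -
  have "(\<Prod>i<N. p ^ i * s - inverse (p ^ i * s)) = (\<Prod>i<N. (p ^ i * s - 1) * (p ^ i * s + 1) / (p ^ i * s))"
    using assms nonzero by (intro prod.cong) (simp_all add: field_simps)
  also have "\<dots> = (\<Prod>i<N. p ^ i * s - 1) * (\<Prod>i<N. p ^ i * s + 1) / (\<Prod>i<N. p ^ i * s)"
    by (simp add: prod_dividef prod.distrib)
  also have "(\<Prod>i<N. p ^ i * s - 1) = (- 1) ^ N * (1 - s ^ N)"
    using prod_diff_swap[of "\<lambda>i. p ^ i * s" "\<lambda>_. 1" "{..<N}"] prod_sub_powers_mult[of 1 s] by simp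
  also have "(\<Prod>i<N. p ^ i * s + 1) = 1 - (- s) ^ N"
    using prod_sub_powers_mult[of 1 "- s"] by (simp add: add.commute)
  also have "(\<Prod>i<N. p ^ i * s) = s ^ N * - ((- 1) ^ N)"
    by (simp add: prod.distrib prod_powers)
  finally show ?thesis
    using assms by (cases "even N") (simp_all add: field_simps)
qed

lemma power_half_eq_minus_1:
  assumes "even N"
  shows "p ^ (N div 2) = - 1"
proof -
  have "(p ^ (N div 2))\<^sup>2 = 1" using assms power_N by (simp flip: power_mult)
  moreover have "0 < N div 2" "N div 2 < N" using assms N_pos by (auto elim: evenE)
  then have "p ^ (N div 2) \<noteq> 1" by (rule power_neq_1)
  ultimately show ?thesis by (simp add: power2_eq_1_iff)
qed

end

lemma prod_lessThan_Suc_cyclic: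
  fixes f :: "nat \<Rightarrow> 'a::comm_monoid_mult"
  assumes "f N = f 0"
  shows "(\<Prod>i<N. f (Suc i)) = (\<Prod>i<N. f i)"
proof (cases N)
  case (Suc m)
  then show ?thesis
    using assms by (simp add: prod.lessThan_Suc_shift[of f m] del: prod.lessThan_Suc) (simp add: mult.commute)
qed simp

lemma ordN_primitive_root:
  fixes q :: complex
  assumes "\<exists>n>0. q ^ n = 1"
  shows "primitive_root_of_unity (q ^ 4) (ordN q)"
proof -
  have ex: "\<exists>n. n > 0 \<and> (q ^ 4) ^ n = 1"
    using assms by (metis mult.commute power_mult power_one)
  have "ordN q > 0 \<and> (q ^ 4) ^ ordN q = 1"
    unfolding ordN_def by (rule LeastI_ex[OF ex])
  moreover have "(q ^ 4) ^ k \<noteq> 1" if "0 < k" "k < ordN q" for k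
    using not_less_Least[of k "\<lambda>n. n > 0 \<and> (q ^ 4) ^ n = 1"] that unfolding ordN_def by auto
  ultimately show ?thesis by unfold_locales auto
qed

lemma lam'_eq_joukowski: "lam' q \<sigma> i = joukowski (q\<^sup>2 * \<sigma> * (q ^ 4) ^ i)"
  unfolding lam'_def joukowski_def power_add power_mult by (simp add: mult_ac)

lemma lamhat_eq: "lamhat q \<sigma> i = (q ^ 4) ^ i * \<sigma> - inverse ((q ^ 4) ^ i * \<sigma>)"
  unfolding lamhat_def by (simp add: power_mult)

lemma lamhat'_eq: "lamhat' q \<sigma> i = (q ^ 4) ^ i * (q\<^sup>2 * \<sigma>) - inverse ((q ^ 4) ^ i * (q\<^sup>2 * \<sigma>))"
  unfolding lamhat'_def power_add power_mult by (simp add: mult_ac)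

context
  fixes q :: complex and N :: nat
  assumes root: "primitive_root_of_unity (q ^ 4) N"
begin

interpretation primitive_root_of_unity "q ^ 4" N by (fact root)

lemma q_power_2N_squared: "(q ^ (2 * N))\<^sup>2 = 1"
  using power_N by (simp flip: power_mult add: mult.commute)

lemma q_power_2N_eq_minus_1: "even N \<Longrightarrow> q ^ (2 * N) = - 1"
  using power_half_eq_minus_1 by (auto simp flip: power_mult elim!: evenE)

lemma z0_eq_joukowski:
  "(q ^ (N\<^sup>2))\<^sup>2 * joukowski (\<sigma> ^ N) = - ((- 1) ^ N) * joukowski ((q\<^sup>2 * \<sigma>) ^ N)"
proof -
  define e where "e = q ^ (2 * N)"
  have "(q ^ (N\<^sup>2))\<^sup>2 = e ^ N"
    unfolding e_def power_mult [symmetric] by (simp add: power2_eq_square mult_ac)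
  moreover have "(q\<^sup>2 * \<sigma>) ^ N = e * \<sigma> ^ N" by (simp add: e_def power_mult_distrib flip: power_mult)
  moreover have "e ^ N = - ((- 1) ^ N) * e"
  proof (cases "even N")
    case True
    then show ?thesis using q_power_2N_eq_minus_1 by (simp add: e_def)
  next
    case False
    then obtain k where "N = Suc (2 * k)" by (metis oddE Suc_eq_plus1)
    then show ?thesis using q_power_2N_squared by (simp add: e_def power_mult)
  qed
  ultimately show ?thesis
    using joukowski_mult_sign[OF q_power_2N_squared[folded e_def]] by simp
qed

lemma prod_kappa_lam':
  assumes "\<sigma> \<noteq> 0"
  shows "(\<Prod>i<N. kappa w w' (lam' q \<sigma> i))
       = kappa (cheb N w) (cheb N w') ((q ^ (N\<^sup>2))\<^sup>2 * joukowski (\<sigma> ^ N))"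
proof -
  obtain a b where "a \<noteq> 0" "w = joukowski a" "b \<noteq> 0" "w' = joukowski b"
    using joukowski_surj by metis
  moreover have "q\<^sup>2 * \<sigma> \<noteq> 0" using nonzero assms by simp
  ultimately show ?thesis
    using prod_kappa_joukowski[of "q\<^sup>2 * \<sigma>" a b]
    by (simp add: lam'_eq_joukowski cheb_joukowski z0_eq_joukowski)
qed

lemma prod_lamhat_lamhat'_sq:
  assumes "\<sigma> \<noteq> 0"
  shows "(\<Prod>i<N. lamhat q \<sigma> i)\<^sup>2 * (\<Prod>i<N. lamhat' q \<sigma> i)\<^sup>2
       = (((q ^ (N\<^sup>2))\<^sup>2 * joukowski (\<sigma> ^ N))\<^sup>2 - 4)\<^sup>2"
proof -
  define e where "e = q ^ (2 * N)"
  define S where "S = \<sigma> ^ N"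
  have "S \<noteq> 0" "e\<^sup>2 = 1" using assms q_power_2N_squared by (simp_all add: S_def e_def)
  have u: "q\<^sup>2 * \<sigma> \<noteq> 0" "(q\<^sup>2 * \<sigma>) ^ N = e * S"
    using nonzero assms by (simp_all add: e_def S_def power_mult_distrib flip: power_mult)
  have "(q ^ (N\<^sup>2))\<^sup>2 * joukowski (\<sigma> ^ N) = - ((- 1) ^ N) * e * joukowski S"
    using z0_eq_joukowski[of \<sigma>] joukowski_mult_sign[OF \<open>e\<^sup>2 = 1\<close>] u(2) by (simp add: S_def)
  then have "((q ^ (N\<^sup>2))\<^sup>2 * joukowski (\<sigma> ^ N))\<^sup>2 = (joukowski S)\<^sup>2"
    using \<open>e\<^sup>2 = 1\<close> by (simp add: power_mult_distrib flip: power_mult)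
  moreover have "(\<Prod>i<N. lamhat q \<sigma> i)\<^sup>2 = ((S - 1) * (1 - (- 1) ^ N * S) / S)\<^sup>2"
    using prod_sub_inverse[OF assms] by (simp add: lamhat_eq S_def power2_eq_square)
  moreover have "(\<Prod>i<N. lamhat' q \<sigma> i)\<^sup>2 = ((e * S - 1) * (1 - (- 1) ^ N * (e * S)) / (e * S))\<^sup>2"
    using prod_sub_inverse[OF u(1)] u(2) by (simp add: lamhat'_eq power2_eq_square)
  moreover have "((S - 1) * (1 - (- 1) ^ N * S) / S)\<^sup>2 * ((e * S - 1) * (1 - (- 1) ^ N * (e * S)) / (e * S))\<^sup>2
      = ((joukowski S)\<^sup>2 - 4)\<^sup>2"
  proof (cases "even N")
    case True
    then show ?thesis using q_power_2N_eq_minus_1 \<open>S \<noteq> 0\<close>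
      by (simp add: e_def joukowski_def field_simps) (simp add: algebra_simps power2_eq_square)
  next
    case False
    have "(e * S - 1) * (1 + e * S) = (S - 1) * (1 + S)" "(e * S)\<^sup>2 = S\<^sup>2"
      using \<open>e\<^sup>2 = 1\<close> by (simp_all add: algebra_simps power2_eq_square)
    with False show ?thesis using \<open>S \<noteq> 0\<close>
      by (simp add: joukowski_def power_divide field_simps) (simp add: algebra_simps eval_nat_numeral)
  qed
  ultimately show ?thesis by simp
qed

lemma prod_r_fun:
  assumes "\<sigma> \<noteq> 0"
  shows "(\<Prod>i<N. r_fun q \<sigma> w1 w2 w3 w4 i) = Rfun N ((q ^ (N\<^sup>2))\<^sup>2 * joukowski (\<sigma> ^ N)) w1 w2 w3 w4"
proof -
  have "(\<Prod>i<N. lamhat q \<sigma> (Suc i)) = (\<Prod>i<N. lamhat q \<sigma> i)"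
    by (rule prod_lessThan_Suc_cyclic) (simp add: lamhat_eq power_N)
  then have "(\<Prod>i<N. r_fun q \<sigma> w1 w2 w3 w4 i)
      = (\<Prod>i<N. kappa w1 w2 (lam' q \<sigma> i)) * (\<Prod>i<N. kappa w3 w4 (lam' q \<sigma> i))
        / ((\<Prod>i<N. lamhat q \<sigma> i)\<^sup>2 * (\<Prod>i<N. lamhat' q \<sigma> i)\<^sup>2)"
    unfolding r_fun_def by (simp add: prod_dividef prod.distrib prod_power_distrib power2_eq_square)
  then show ?thesis
    unfolding Rfun_def prod_kappa_lam'[OF assms] prod_lamhat_lamhat'_sq[OF assms] .
qed

end

lemma image_prod_pairs:
  fixes r :: "nat \<Rightarrow> 'a::field"
  assumes "N > 0"
  shows "(\<lambda>(s, t). (\<Prod>i<N. s i, \<Prod>i<N. t i)) `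
           {(s, t). (\<forall>i<N. s i * t i = r i) \<and> (\<forall>i\<ge>N. s i = 0 \<and> t i = 0)}
         = {(x, y). x * y = (\<Prod>i<N. r i)}"
  (is "?f ` ?E = ?C")
proof
  show "?f ` ?E \<subseteq> ?C"
  proof clarify
    fix s t :: "nat \<Rightarrow> 'a" assume "\<forall>i<N. s i * t i = r i"
    then show "(\<Prod>i<N. s i) * (\<Prod>i<N. t i) = (\<Prod>i<N. r i)"
      by (simp add: prod.distrib[symmetric])
  qed
next
  have point_in_image: "(a * (\<Prod>i\<in>{..<N}-{j}. b i), d * (\<Prod>i\<in>{..<N}-{j}. c i)) \<in> ?f ` ?E"
    if "j < N" "a * d = r j" "\<And>i. i < N \<Longrightarrow> i \<noteq> j \<Longrightarrow> b i * c i = r i" for j a d b c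
  proof -
    define s where "s i = (if i < N then (b(j := a)) i else 0)" for i
    define t where "t i = (if i < N then (c(j := d)) i else 0)" for i
    have "(\<Prod>i\<in>{..<N}-{j}. s i) = (\<Prod>i\<in>{..<N}-{j}. b i)"
      by (rule prod.cong) (auto simp: s_def)
    then have "(\<Prod>i<N. s i) = a * (\<Prod>i\<in>{..<N}-{j}. b i)"
      using prod.remove[of "{..<N}" j s] that(1) by (simp add: s_def)
    moreover have "(\<Prod>i\<in>{..<N}-{j}. t i) = (\<Prod>i\<in>{..<N}-{j}. c i)"
      by (rule prod.cong) (auto simp: t_def)
    then have "(\<Prod>i<N. t i) = d * (\<Prod>i\<in>{..<N}-{j}. c i)"
      using prod.remove[of "{..<N}" j t] that(1) by (simp add: t_def)
    moreover have "(s, t) \<in> ?E" using that by (auto simp: s_def t_def)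
    ultimately show ?thesis by (intro image_eqI[where x = "(s, t)"]) simp_all
  qed
  show "?C \<subseteq> ?f ` ?E"
  proof clarify
    fix x y assume xy: "x * y = (\<Prod>i<N. r i)"
    show "(x, y) \<in> ?f ` ?E"
    proof (cases "\<exists>j<N. r j = 0")
      case False
      define R where "R = (\<Prod>i\<in>{..<N}-{0}. r i)"
      have "R \<noteq> 0" using False by (simp add: R_def)
      moreover have "(\<Prod>i<N. r i) = r 0 * R"
        using assms by (simp add: R_def prod.remove[of _ 0])
      ultimately have "x * (y / R) = r 0" using xy by (simp add: field_simps)
      from point_in_image[OF assms this, of "\<lambda>_. 1" r] have "(x, y / R * R) \<in> ?f ` ?E"
        by (simp add: R_def)
      with \<open>R \<noteq> 0\<close> show ?thesis by simp
    next
      case True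
      then obtain j where j: "j < N" "r j = 0" by blast
      then have "x = 0 \<or> y = 0" using xy by (metis lessThan_iff mult_eq_0_iff prod_zero_iff finite_lessThan)
      then show ?thesis
      proof
        assume "x = 0"
        with point_in_image[OF j(1), of 0 y r "\<lambda>_. 1"] show ?thesis using j by simp
      next
        assume "y = 0"
        with point_in_image[OF j(1), of x 0 "\<lambda>_. 1" r] show ?thesis using j by simp
      qed
    qed
  qed
qed

theorem mainTheorem18:
  fixes q \<sigma> w1 w2 w3 w4 :: complex
  assumes "\<exists>n>0. q^n = 1"
    and "q^8 \<noteq> 1"
    and "\<sigma> \<noteq> 0"
    and "(q^((ordN q)^2))^2 * (\<sigma>^(ordN q) + inverse (\<sigma>^(ordN q))) \<noteq> 2"
    and "(q^((ordN q)^2))^2 * (\<sigma>^(ordN q) + inverse (\<sigma>^(ordN q))) \<noteq> -2"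
  shows "(\<lambda>(s, t). (\<Prod>i<ordN q. s i, \<Prod>i<ordN q. t i)) ` E0 q \<sigma> w1 w2 w3 w4
         = {(x, y). x * y = Rfun (ordN q)
              ((q^((ordN q)^2))^2 * (\<sigma>^(ordN q) + inverse (\<sigma>^(ordN q)))) w1 w2 w3 w4}"
proof -
  have root: "primitive_root_of_unity (q ^ 4) (ordN q)"
    using assms(1) by (rule ordN_primitive_root)
  have "(\<Prod>i<ordN q. r_fun q \<sigma> w1 w2 w3 w4 i)
      = Rfun (ordN q) ((q^((ordN q)^2))^2 * (\<sigma>^(ordN q) + inverse (\<sigma>^(ordN q)))) w1 w2 w3 w4"
    using prod_r_fun[OF root assms(3)] by (simp add: joukowski_def)
  then show ?thesis
    unfolding E0_def
    using image_prod_pairs[OF primitive_root_of_unity.N_pos[OF root], of "r_fun q \<sigma> w1 w2 w3 w4"]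
    by simp
qed

end
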